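(* Let $n,m,k$ be positive integers, let $X\in\mathbb{R}^{n\times n}$ be symmetric, let $\Lambda:\mathbb{R}^{n\times n}\to\mathbb{R}^{m\times m}$ be a linear map and $Y\in\mathbb{R}^{m\times m}$. Consider \[ (\mathrm{P})\qquad \max_{\rho\in\mathbb{R}^{n\times n}}\ \operatorname{Tr}(X\rho)\quad\text{s.t.}\quad \Lambda(\rho)=Y,\ \operatorname{Tr}(\rho)=1,\ \rho\ge 0,\ \operatorname{rank}(\rho)\le k . \] Let $\mathcal{H}_A=\mathcal{H}_B=\mathbb{R}^n\otimes\mathbb{R}^k$ (so operators on $\mathcal{H}_A\otimes\mathcal{H}_B$ are $(nk)^2\times(nk)^2$ matrices), $\widetilde{X}=X\otimes\mathbb{1}_k$ and $\widetilde{\Lambda}(\cdot)=\Lambda[\operatorname{Tr}_2(\cdot)]$ with $\operatorname{Tr}_2$ the partial trace over the factor $\mathbb{R}^k$. Then (P) is equivalent to (has the same optimal value as) the conic program over real matrices $\Phi_{AB}$ \[ \max_{\Phi_{AB}}\ \operatorname{Tr}\big[(\widetilde{X}_A\otimes\mathbb{1}_B)\Phi_{AB}\big]\quad\text{s.t.}\quad \Phi_{AB}\in\mathrm{SEP},\ \operatorname{Tr}(\Phi_{AB})=1,\ V_{AB}\Phi_{AB}=\Phi_{AB},\ \Phi_{AB}^{T_A}=\Phi_{AB}, \] \[ (\widetilde{\Lambda}_A\otimes\mathrm{id}_B)(\Phi_{AB})=Y\otimes\operatorname{Tr}_A(\Phi_{AB}). \]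
   Context: $\mathrm{SEP}$ is the complex separable cone: the convex hull of $\{M_A\otimes N_B: M_A\ge0,N_B\ge0\}$ with $M_A,N_B$ complex positive semidefinite $nk\times nk$ matrices; the constraint requires the real matrix $\Phi_{AB}$ to lie in this cone. $V_{AB}$ is the swap of the two tensor factors. $\Phi_{AB}^{T_A}$ denotes the partial transpose on the first factor $\mathcal{H}_A$ with respect to the standard basis. A subscript $A$ (resp. $B$) indicates action on the first (resp. second) factor, $\mathrm{id}_B$ is the identity map, $\operatorname{Tr}_A$ the partial trace over the first factor. *)

theory Defs
  imports "HOL-Analysis.Analysis"
begin

text \<open>Finite-dimensional spaces are indexed by finite types: R^n by 'n, R^k by 'k,
  R^m by 'm (so n = CARD('n) etc.).  H_A = H_B = R^n (x) R^k is indexed by 'n \<times> 'k,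
  and H_A (x) H_B by ('n \<times> 'k) \<times> ('n \<times> 'k).\<close>

definition kron :: "'a::times^'p::finite^'p \<Rightarrow> 'a^'q::finite^'q \<Rightarrow> 'a^('p \<times> 'q)^('p \<times> 'q)" where
  "kron M N = (\<chi> u v. M $ fst u $ fst v * N $ snd u $ snd v)"

definition psd_real :: "real^'p::finite^'p \<Rightarrow> bool" where
  "psd_real M \<longleftrightarrow> transpose M = M \<and> (\<forall>x::real^'p. 0 \<le> x \<bullet> (M *v x))"

definition psd_complex :: "complex^'p::finite^'p \<Rightarrow> bool" where
  "psd_complex M \<longleftrightarrow> (\<forall>i j. M $ i $ j = cnj (M $ j $ i)) \<and>
     (\<forall>x::complex^'p. 0 \<le> Re (\<Sum>i\<in>UNIV. \<Sum>j\<in>UNIV. cnj (x $ i) * M $ i $ j * x $ j))"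

definition SEP :: "(complex^('p::finite \<times> 'p)^('p \<times> 'p)) set" where
  "SEP = {\<Phi>. \<exists>(r::nat) (c::nat \<Rightarrow> real) (M::nat \<Rightarrow> complex^'p^'p) (N::nat \<Rightarrow> complex^'p^'p).
             (\<forall>j<r. 0 \<le> c j \<and> psd_complex (M j) \<and> psd_complex (N j)) \<and>
             (\<Sum>j<r. c j) = 1 \<and>
             \<Phi> = (\<Sum>j<r. c j *\<^sub>R kron (M j) (N j))}"

definition cmat :: "real^'p::finite^'q::finite \<Rightarrow> complex^'p^'q" where
  "cmat A = (\<chi> i j. complex_of_real (A $ i $ j))"

definition ptrace2 :: "'a::comm_monoid_add^('p::finite \<times> 'q::finite)^('p \<times> 'q) \<Rightarrow> 'a^'p^'p" where
  "ptrace2 A = (\<chi> i j. \<Sum>a\<in>UNIV. A $ (i, a) $ (j, a))"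

definition ptrace1 :: "'a::comm_monoid_add^('p::finite \<times> 'q::finite)^('p \<times> 'q) \<Rightarrow> 'a^'q^'q" where
  "ptrace1 A = (\<chi> i j. \<Sum>a\<in>UNIV. A $ (a, i) $ (a, j))"

definition swap_op :: "'a::zero_neq_one^('p::finite \<times> 'p)^('p \<times> 'p)" where
  "swap_op = (\<chi> u v. if fst u = snd v \<and> snd u = fst v then 1 else 0)"

definition ptransA :: "'a^('p::finite \<times> 'q::finite)^('p \<times> 'q) \<Rightarrow> 'a^('p \<times> 'q)^('p \<times> 'q)" where
  "ptransA A = (\<chi> u v. A $ (fst v, snd u) $ (fst u, snd v))"

text \<open>(L_A (x) id_B) applied to an operator on H_A (x) H_B, for a linear map L.\<close>
definition map_A :: "('a^'p::finite^'p \<Rightarrow> 'a^'r::finite^'r) \<Rightarrow> 'a^('p \<times> 'q::finite)^('p \<times> 'q) \<Rightarrow> 'a^('r \<times> 'q)^('r \<times> 'q)" where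
  "map_A L A = (\<chi> u v. L (\<chi> p p'. A $ (p, snd u) $ (p', snd v)) $ fst u $ fst v)"

end

theory Submission
  imports Defs
begin

(* A feasible rho of (P) is positive semidefinite of rank at most k, hence rho = F F^T with F an
   n x k matrix.  Reading F as a vector psi of R^n (x) R^k, the operator P = psi psi^T has partial
   trace rho, and Phi = P (x) P satisfies all constraints of the conic program with the same
   objective value.

   Conversely, a separable Phi is a finite sum of pure product terms x x^* (x) y y^*.  Swap
   invariance forces y to be proportional to x, and invariance under the partial transpose then
   makes x x^* real, so Phi = sum_t P_t (x) P_t with P_t = phi_t phi_t^T for real vectors phi_t.
   Evaluating the linear constraint on the blocks of Phi and summing squares shows that it holds
   for each P_t separately.  With s_t = Tr P_t the objective is a convex combination, with weights
   s_t^2, of the objective values of the primal feasible points Tr_2 P_t / s_t, so one of these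
   is at least as good. *)

section \<open>Positive semidefinite matrices\<close>

definition outer :: "real^'p::finite \<Rightarrow> real^'p^'p" where
  "outer v = (\<chi> i j. v$i * v$j)"

definition couter :: "complex^'p::finite \<Rightarrow> complex^'p^'p" where
  "couter v = (\<chi> i j. v$i * cnj (v$j))"

definition cvec :: "real^'p::finite \<Rightarrow> complex^'p" where
  "cvec v = (\<chi> i. complex_of_real (v$i))"

definition sesq :: "complex^'p::finite^'p \<Rightarrow> complex^'p \<Rightarrow> complex^'p \<Rightarrow> complex" where
  "sesq M x y = (\<Sum>a\<in>UNIV. \<Sum>b\<in>UNIV. cnj (x$a) * M$a$b * y$b)"

lemma matrix_vector_mult_axis_nth: "(M *v axis j c) $ i = M$i$j * c"
  for M :: "'a::comm_semiring_1^'n::finite^'m::finite"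
  by (simp add: matrix_vector_mult_def axis_def if_distrib cong: if_cong)

lemma sesq_add_left: "sesq M (x + y) z = sesq M x z + sesq M y z"
  by (simp add: sesq_def algebra_simps sum.distrib)

lemma sesq_add_right: "sesq M x (y + z) = sesq M x y + sesq M x z"
  by (simp add: sesq_def algebra_simps sum.distrib)

lemma sesq_diff_matrix: "sesq (A - B) x y = sesq A x y - sesq B x y"
  by (simp add: sesq_def algebra_simps sum_subtractf)

lemma sesq_axis_left: "sesq M (axis i c) y = cnj c * (M *v y)$i"
proof -
  have "sesq M (axis i c) y = (\<Sum>a\<in>UNIV. if a = i then cnj c * (M *v y)$i else 0)"
    unfolding sesq_def
    by (intro sum.cong refl) (simp add: axis_def matrix_vector_mult_def sum_distrib_left mult.assoc)
  then show ?thesis by simp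
qed

lemma sesq_conj_swap:
  assumes "\<And>i j. M$i$j = cnj (M$j$i)"
  shows "sesq M x y = cnj (sesq M y x)"
proof -
  have "cnj (M$a$b) = M$b$a" for a b
    using assms[of b a] by simp
  then show ?thesis
    unfolding sesq_def by (subst sum.swap) (simp add: mult_ac)
qed

lemma sesq_couter:
  "sesq (couter v) x y = cnj (\<Sum>a\<in>UNIV. cnj (v$a) * x$a) * (\<Sum>b\<in>UNIV. cnj (v$b) * y$b)"
  unfolding sesq_def couter_def
  by (simp add: sum_product sum_distrib_left sum_distrib_right mult_ac) (rule sum.swap)

lemma psd_complexI:
  assumes "\<And>i j. M$i$j = cnj (M$j$i)" and "\<And>x. 0 \<le> Re (sesq M x x)"
  shows "psd_complex M"
  using assms unfolding psd_complex_def sesq_def by blast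

lemma psd_complex_hermitian: "psd_complex M \<Longrightarrow> M$i$j = cnj (M$j$i)"
  unfolding psd_complex_def by blast

lemma psd_complex_sesq_nonneg: "psd_complex M \<Longrightarrow> 0 \<le> Re (sesq M x x)"
  unfolding psd_complex_def sesq_def by blast

lemma psd_complex_diag_real: "psd_complex M \<Longrightarrow> M$i$i = complex_of_real (Re (M$i$i))"
  using psd_complex_hermitian[of M i i] by (metis Reals_cnj_iff complex_is_Real_iff of_real_Re)

lemma psd_complex_diag_nonneg: "psd_complex M \<Longrightarrow> 0 \<le> Re (M$i$i)"
  using psd_complex_sesq_nonneg[of M "axis i 1"]
  by (simp add: sesq_axis_left matrix_vector_mult_axis_nth)

lemma psd_complex_zero_diag:
  assumes psd: "psd_complex M" and zero: "M$j$j = 0"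
  shows "M$i$j = 0"
proof (cases "i = j")
  case True
  with zero show ?thesis by simp
next
  case False
  define m where "m = M$i$j"
  define d where "d = Re (M$i$i)"
  have d: "0 \<le> d" "M$i$i = complex_of_real d"
    using psd_complex_diag_nonneg[OF psd] psd_complex_diag_real[OF psd] by (simp_all add: d_def)
  have Mji: "M$j$i = cnj m"
    using psd_complex_hermitian[OF psd, of j i] by (simp add: m_def)
  have form: "0 \<le> (cmod m)\<^sup>2 * (t * t * d - 2 * t)" for t :: real
  proof -
    define s where "s = - complex_of_real t * m"
    let ?y = "axis j 1 + axis i s"
    have "sesq M ?y ?y = cnj m * s + cnj s * m + cnj s * complex_of_real d * s"
      using False zero Mji d(2)
      by (simp add: sesq_add_left sesq_add_right sesq_axis_left matrix_vector_mult_axis_nth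
          flip: m_def)
    also have "\<dots> = (m * cnj m) * complex_of_real (t * t * d - 2 * t)"
      unfolding s_def by (simp add: algebra_simps)
    also have "m * cnj m = complex_of_real ((cmod m)\<^sup>2)"
      by (rule complex_norm_square[symmetric])
    finally show ?thesis
      using psd_complex_sesq_nonneg[OF psd, of ?y] by (simp flip: of_real_mult)
  qed
  define t where "t = 1 / (d + 1)"
  have t: "0 < t" "t * d < 1"
    using d(1) by (simp_all add: t_def field_simps)
  have "t * (t * d) < t * 1"
    using mult_strict_left_mono[OF t(2) t(1)] .
  then have "t * t * d - 2 * t < 0"
    using t(1) by (simp add: mult.assoc)
  with form[of t] have "(cmod m)\<^sup>2 \<le> 0"
    by (metis linorder_not_le mult_pos_neg)
  then show ?thesis by (simp add: m_def)
qed

lemma psd_complex_eq_0: "psd_complex M \<Longrightarrow> (\<And>i. M$i$i = 0) \<Longrightarrow> M = 0"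
  using psd_complex_zero_diag by (simp add: vec_eq_iff) blast

(* Completing the square in the pivot coordinate i. *)
lemma sesq_minus_couter_pivot:
  fixes M :: "complex^'p::finite^'p" and x :: "complex^'p"
  assumes herm: "\<And>a b. M$a$b = cnj (M$b$a)" and d: "0 < d" "M$i$i = complex_of_real d"
  defines "v \<equiv> (\<chi> a. M$a$i / complex_of_real (sqrt d))"
    and "y \<equiv> x + axis i (- (M *v x)$i / complex_of_real d)"
  shows "sesq (M - couter v) x x = sesq M y y"
proof -
  define w where "w = (M *v x)$i"
  have "sesq M x (axis i c) = cnj w * c" for c
    using sesq_conj_swap[of M x "axis i c", OF herm] by (simp add: sesq_axis_left w_def)
  then have "sesq M y y = sesq M x x - cnj w * w / complex_of_real d"
    using d by (simp add: y_def sesq_add_left sesq_add_right sesq_axis_left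
        matrix_vector_mult_axis_nth w_def[symmetric] field_simps)
  moreover have "cnj w * w / complex_of_real d = sesq (couter v) x x"
  proof -
    have "cnj (M$b$i) = M$i$b" for b
      using herm[of i b] by simp
    then have "(\<Sum>b\<in>UNIV. cnj (v$b) * x$b) = w / complex_of_real (sqrt d)"
      by (simp add: v_def w_def matrix_vector_mult_def sum_divide_distrib)
    moreover have "complex_of_real (sqrt d) * complex_of_real (sqrt d) = complex_of_real d"
      using d(1) by (simp flip: of_real_mult)
    ultimately show ?thesis
      by (simp add: sesq_couter)
  qed
  ultimately show ?thesis
    by (simp add: sesq_diff_matrix)
qed

lemma psd_complex_minus_couter:
  fixes M :: "complex^'p::finite^'p"
  assumes psd: "psd_complex M" and pos: "0 < Re (M$i$i)"
  defines "v \<equiv> (\<chi> a. M$a$i / complex_of_real (sqrt (Re (M$i$i))))"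
  shows "psd_complex (M - couter v)" and "(M - couter v)$i$i = 0"
    and "M$j$j = 0 \<Longrightarrow> (M - couter v)$j$j = 0"
proof -
  define d where "d = Re (M$i$i)"
  have d: "0 < d" "M$i$i = complex_of_real d"
    using pos psd_complex_diag_real[OF psd, of i] by (simp_all add: d_def)
  have herm: "M$a$b = cnj (M$b$a)" for a b
    using psd_complex_hermitian[OF psd] .
  have couter_v: "couter v $ a $ b = M$a$i * M$i$b / complex_of_real d" for a b
  proof -
    have "complex_of_real (sqrt d) * complex_of_real (sqrt d) = complex_of_real d"
      using d(1) by (simp flip: of_real_mult)
    then show ?thesis
      using herm[of i b] by (simp add: couter_def v_def d_def[symmetric] field_simps)
  qed
  show "psd_complex (M - couter v)"
  proof (rule psd_complexI)
    show "(M - couter v)$a$b = cnj ((M - couter v)$b$a)" for a b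
      using herm[of a b] herm[of a i] herm[of i b] by (simp add: couter_v mult.commute)
    show "0 \<le> Re (sesq (M - couter v) x x)" for x
      using sesq_minus_couter_pivot[OF herm d, of x] psd_complex_sesq_nonneg[OF psd]
      by (simp add: v_def d_def)
  qed
  show "(M - couter v)$i$i = 0"
    using d by (simp add: couter_v)
  assume "M$j$j = 0"
  then have "M$i$j = 0" "M$j$i = 0"
    using psd_complex_zero_diag[OF psd] herm[of j i] by auto
  with \<open>M$j$j = 0\<close> show "(M - couter v)$j$j = 0"
    by (simp add: couter_v)
qed

lemma psd_complex_sum_couter:
  "psd_complex M \<Longrightarrow> \<exists>(r::nat) v. M = (\<Sum>l<r. couter (v l))"
proof (induction "card {i. M$i$i \<noteq> 0}" arbitrary: M rule: less_induct)
  case less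
  show ?case
  proof (cases "\<forall>i. M$i$i = 0")
    case True
    then have "M = 0"
      using psd_complex_eq_0[OF less.prems] by blast
    then have "M = (\<Sum>l<0::nat. couter (v l))" for v
      by simp
    then show ?thesis
      by blast
  next
    case False
    then obtain i where i: "M$i$i \<noteq> 0"
      by blast
    then have pos: "0 < Re (M$i$i)"
      using psd_complex_diag_nonneg[OF less.prems, of i] psd_complex_diag_real[OF less.prems, of i]
      by (metis of_real_0 order_le_less)
    define v0 where "v0 = (\<chi> a. M$a$i / complex_of_real (sqrt (Re (M$i$i))))"
    note step = psd_complex_minus_couter[OF less.prems pos, folded v0_def]
    have "{j. (M - couter v0)$j$j \<noteq> 0} \<subset> {j. M$j$j \<noteq> 0}"
      using step(2,3) i by blast
    then have "card {j. (M - couter v0)$j$j \<noteq> 0} < card {j. M$j$j \<noteq> 0}"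
      by (simp add: psubset_card_mono)
    then obtain r :: nat and v where "M - couter v0 = (\<Sum>l<r. couter (v l))"
      using less.hyps step(1) by blast
    then have "M = (\<Sum>l<Suc r. couter ((v(r := v0)) l))"
      by (simp add: algebra_simps)
    then show ?thesis
      by blast
  qed
qed

lemma cmat_diff: "cmat (A - B) = cmat A - cmat B"
  by (simp add: cmat_def vec_eq_iff)

lemma cmat_inject: "cmat A = cmat B \<longleftrightarrow> A = B"
  by (simp add: cmat_def vec_eq_iff)

lemma cmat_outer: "cmat (outer v) = couter (cvec v)"
  by (simp add: cmat_def couter_def cvec_def outer_def vec_eq_iff)

lemma Re_sesq_cmat:
  "Re (sesq (cmat M) x x)
     = (\<chi> i. Re (x$i)) \<bullet> (M *v (\<chi> i. Re (x$i))) + (\<chi> i. Im (x$i)) \<bullet> (M *v (\<chi> i. Im (x$i)))"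
  by (simp add: sesq_def cmat_def inner_vec_def matrix_vector_mult_def sum_distrib_left
      sum.distrib[symmetric] algebra_simps)

lemma sesq_cmat_cvec: "sesq (cmat M) (cvec x) (cvec x) = complex_of_real (x \<bullet> (M *v x))"
  by (simp add: sesq_def cmat_def cvec_def inner_vec_def matrix_vector_mult_def sum_distrib_left
      mult_ac)

lemma psd_real_sym: "psd_real M \<Longrightarrow> M$j$i = M$i$j"
  unfolding psd_real_def by (metis transpose_def vec_lambda_beta)

lemma psd_complex_cmat_iff: "psd_complex (cmat M) \<longleftrightarrow> psd_real M"
proof
  assume psd: "psd_complex (cmat M)"
  have "transpose M = M"
    using psd_complex_hermitian[OF psd] by (simp add: cmat_def transpose_def vec_eq_iff)
  moreover have "0 \<le> x \<bullet> (M *v x)" for x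
    using psd_complex_sesq_nonneg[OF psd, of "cvec x"] by (simp add: sesq_cmat_cvec)
  ultimately show "psd_real M"
    unfolding psd_real_def by blast
next
  assume psd: "psd_real M"
  then have "M$j$i = M$i$j" for i j
    by (rule psd_real_sym)
  moreover have "0 \<le> Re (sesq (cmat M) x x)" for x
    using psd unfolding psd_real_def Re_sesq_cmat by (simp add: add_nonneg_nonneg)
  ultimately show "psd_complex (cmat M)"
    by (intro psd_complexI) (simp_all add: cmat_def)
qed

lemma psd_real_pos_diag:
  assumes "psd_real M" and "M \<noteq> 0"
  shows "\<exists>i. 0 < M$i$i"
proof (rule ccontr)
  assume "\<nexists>i. 0 < M$i$i"
  moreover have psd: "psd_complex (cmat M)"
    using assms(1) by (simp add: psd_complex_cmat_iff)
  ultimately have "cmat M $ i $ i = 0" for i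
    using psd_complex_diag_nonneg[OF psd, of i] by (simp add: cmat_def) (meson antisym not_less)
  then have "cmat M = cmat 0"
    using psd_complex_eq_0[OF psd] by (simp add: cmat_def vec_eq_iff)
  with assms(2) show False
    by (simp add: cmat_inject)
qed

lemma psd_real_minus_outer:
  assumes psd: "psd_real M" and pos: "0 < M$i$i"
  shows "psd_real (M - outer (\<chi> a. M$a$i / sqrt (M$i$i)))"
proof -
  let ?v = "\<chi> a. M$a$i / sqrt (M$i$i)"
  have "(\<chi> a. cmat M $ a $ i / complex_of_real (sqrt (Re (cmat M $ i $ i)))) = cvec ?v"
    by (simp add: cvec_def cmat_def vec_eq_iff)
  moreover have "0 < Re (cmat M $ i $ i)"
    using pos by (simp add: cmat_def)
  ultimately have "psd_complex (cmat M - couter (cvec ?v))"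
    using psd_complex_minus_couter(1)[of "cmat M" i] psd by (simp add: psd_complex_cmat_iff)
  then show ?thesis
    by (simp add: cmat_diff cmat_outer flip: psd_complex_cmat_iff)
qed

lemma outer_mult: "outer v *v x = (v \<bullet> x) *\<^sub>R v"
  by (simp add: outer_def matrix_vector_mult_def inner_vec_def vec_eq_iff sum_distrib_left
      algebra_simps)

lemma transpose_outer: "transpose (outer v) = outer v"
  by (simp add: transpose_def outer_def vec_eq_iff mult.commute)

lemma trace_outer: "trace (outer v) = v \<bullet> v"
  by (simp add: trace_def outer_def inner_vec_def)

lemma outer_scaleR: "outer (c *\<^sub>R v) = (c * c) *\<^sub>R outer v"
  by (simp add: outer_def vec_eq_iff mult_ac)

lemma psd_real_outer: "psd_real (outer v)"
  unfolding psd_real_def by (simp add: transpose_outer outer_mult inner_commute)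

lemma subspace_range_matrix_vector_mult: "subspace (range (\<lambda>x. A *v x))"
  for A :: "real^'n::finite^'m::finite"
  by (intro linear_subspace_image matrix_vector_mul_linear subspace_UNIV)

lemma rank_less_if_range_psubset:
  fixes A B :: "real^'n::finite^'m::finite"
  assumes "range (\<lambda>x. A *v x) \<subseteq> range (\<lambda>x. B *v x)"
    and "v \<in> range (\<lambda>x. B *v x)" and "v \<notin> range (\<lambda>x. A *v x)"
  shows "rank A < rank B"
proof -
  have "span (range (\<lambda>x. A *v x)) \<subset> span (range (\<lambda>x. B *v x))"
    using assms by (simp add: span_eq_iff[THEN iffD2, OF subspace_range_matrix_vector_mult]) blast
  then show ?thesis
    unfolding rank_dim_range by (rule dim_psubset)
qed

lemma rank_minus_outer_less:
  fixes M :: "real^'p::finite^'p"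
  assumes sym: "\<And>a b. M$b$a = M$a$b" and pos: "0 < M$i$i"
  defines "v \<equiv> \<chi> a. M$a$i / sqrt (M$i$i)"
  shows "rank (M - outer v) < rank M"
proof -
  define s where "s = sqrt (M$i$i)"
  have s: "0 < s" "s * s = M$i$i"
    using pos by (simp_all add: s_def)
  have column_i: "M *v axis i 1 = s *\<^sub>R v"
    using s by (simp add: v_def s_def[symmetric] vec_eq_iff matrix_vector_mult_axis_nth)
  have "range (\<lambda>x. (M - outer v) *v x) \<subseteq> range (\<lambda>x. M *v x)"
  proof clarify
    fix x
    have "(M - outer v) *v x = M *v (x - ((v \<bullet> x) / s) *\<^sub>R axis i 1)"
      using s by (simp add: matrix_vector_mult_diff_rdistrib matrix_vector_mult_diff_distrib
          outer_mult matrix_vector_mult_scaleR column_i)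
    then show "(M - outer v) *v x \<in> range (\<lambda>x. M *v x)"
      by blast
  qed
  moreover have "v = M *v ((1 / s) *\<^sub>R axis i 1)"
    using s by (simp add: matrix_vector_mult_scaleR column_i)
  then have "v \<in> range (\<lambda>x. M *v x)"
    by blast
  moreover have "v \<notin> range (\<lambda>x. (M - outer v) *v x)"
  proof
    assume "v \<in> range (\<lambda>x. (M - outer v) *v x)"
    then obtain z where z: "v = (M - outer v) *v z"
      by blast
    have v_nth: "v$b = M$b$i / s" for b
      by (simp add: v_def s_def)
    have "v$i = s"
      using s(1) by (simp add: v_nth flip: s(2))
    have row_i: "(M - outer v)$i$b = 0" for b
      using pos s(2) sym[of b i] by (simp add: outer_def v_nth field_simps)
    have "v$i = ((M - outer v) *v z)$i"
      using z by (rule arg_cong)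
    also have "\<dots> = 0"
      unfolding matrix_vector_mult_def by (simp only: vec_lambda_beta row_i) simp
    finally have "v$i = 0" .
    with \<open>v$i = s\<close> show False
      using s by simp
  qed
  ultimately show ?thesis
    by (rule rank_less_if_range_psubset)
qed

lemma psd_real_sum_outer:
  "psd_real M \<Longrightarrow> \<exists>r v. r \<le> rank M \<and> M = (\<Sum>l<r. outer (v l))"
proof (induction "rank M" arbitrary: M rule: less_induct)
  case less
  show ?case
  proof (cases "M = 0")
    case True
    then show ?thesis
      by (intro exI[of _ 0]) simp
  next
    case False
    then obtain i where pos: "0 < M$i$i"
      using psd_real_pos_diag[OF less.prems] by blast
    define v0 where "v0 = (\<chi> a. M$a$i / sqrt (M$i$i))"
    have "psd_real (M - outer v0)" and less_rank: "rank (M - outer v0) < rank M"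
      using psd_real_minus_outer[OF less.prems pos] rank_minus_outer_less[OF _ pos]
        psd_real_sym[OF less.prems] by (auto simp: v0_def)
    then obtain r v where r: "r \<le> rank (M - outer v0)" "M - outer v0 = (\<Sum>l<r. outer (v l))"
      using less.hyps by blast
    have "M = (\<Sum>l<Suc r. outer ((v(r := v0)) l))"
      using r(2) by (simp add: algebra_simps)
    with r(1) less_rank show ?thesis
      by (intro exI[of _ "Suc r"] exI[of _ "v(r := v0)"]) simp
  qed
qed

lemma psd_real_gram: "psd_real (F ** transpose F)"
  for F :: "real^'k::finite^'n::finite"
  unfolding psd_real_def
proof (intro conjI allI)
  show "transpose (F ** transpose F) = F ** transpose F"
    by (simp add: matrix_transpose_mul)
  fix x :: "real^'n"
  have "x \<bullet> ((F ** transpose F) *v x) = (transpose F *v x) \<bullet> (transpose F *v x)"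
    by (simp add: matrix_vector_mul_assoc[symmetric] dot_lmul_matrix)
  then show "0 \<le> x \<bullet> ((F ** transpose F) *v x)"
    by simp
qed

lemma mult_transpose_eq_sum_outer: "F ** transpose F = (\<Sum>l\<in>UNIV. outer (column l F))"
  for F :: "real^'k::finite^'n::finite"
  by (simp add: vec_eq_iff matrix_matrix_mult_def transpose_def outer_def column_def sum_component)

lemma psd_real_rank_le_iff_gram:
  fixes M :: "real^'n::finite^'n"
  shows "psd_real M \<and> rank M \<le> CARD('k::finite) \<longleftrightarrow> (\<exists>F :: real^'k^'n. M = F ** transpose F)"
proof
  assume psd_rank: "psd_real M \<and> rank M \<le> CARD('k)"
  then obtain r v where "r \<le> rank M" and M: "M = (\<Sum>l<r. outer (v l))"
    using psd_real_sum_outer by blast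
  with psd_rank have r: "r \<le> CARD('k)"
    by linarith
  obtain h :: "nat \<Rightarrow> 'k" where h: "bij_betw h {..<CARD('k)} UNIV"
    using ex_bij_betw_nat_finite[of "UNIV :: 'k set"] by (auto simp: atLeast0LessThan)
  define w where "w j = (if j < r then v j else 0)" for j
  define F :: "real^'k^'n" where "F = (\<chi> a l. w (inv_into {..<CARD('k)} h l) $ a)"
  have "F ** transpose F = (\<Sum>l\<in>UNIV. outer (w (inv_into {..<CARD('k)} h l)))"
    by (simp add: mult_transpose_eq_sum_outer F_def column_def)
  also have "\<dots> = (\<Sum>j<CARD('k). outer (w j))"
    using h by (simp add: sum.reindex_bij_betw[OF h, symmetric] bij_betw_inv_into_left)
  also have "\<dots> = (\<Sum>j<r. outer (w j))"
    using r by (intro sum.mono_neutral_right) (auto simp: w_def outer_def vec_eq_iff)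
  also have "\<dots> = M"
    by (simp add: M w_def)
  finally show "\<exists>F :: real^'k^'n. M = F ** transpose F"
    by metis
next
  assume "\<exists>F :: real^'k^'n. M = F ** transpose F"
  then obtain F :: "real^'k^'n" where M: "M = F ** transpose F" ..
  have "rank M \<le> CARD('k)"
    using rank_mul_le_left[of F "transpose F"] rank_bound[of F] by (simp add: M)
  with M show "psd_real M \<and> rank M \<le> CARD('k)"
    by (simp add: psd_real_gram)
qed

section \<open>Kronecker products, partial traces and partial transposes\<close>

definition block :: "'a^('p::finite \<times> 'q::finite)^('p \<times> 'q) \<Rightarrow> 'q \<Rightarrow> 'q \<Rightarrow> 'a^'p^'p" where
  "block A q q' = (\<chi> p p'. A $ (p, q) $ (p', q'))"

definition reshape :: "'a^('p::finite \<times> 'q::finite) \<Rightarrow> 'a^'q^'p" where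
  "reshape \<psi> = (\<chi> i l. \<psi> $ (i, l))"

lemma sum_UNIV_prod: "(\<Sum>u\<in>UNIV. f u) = (\<Sum>a\<in>UNIV. \<Sum>b\<in>UNIV. f (a, b))"
  for f :: "'a::finite \<times> 'b::finite \<Rightarrow> 'c::comm_monoid_add"
  by (simp add: UNIV_Times_UNIV[symmetric] sum.cartesian_product del: UNIV_Times_UNIV)

lemma trace_sum: "trace (\<Sum>i\<in>I. f i) = (\<Sum>i\<in>I. trace (f i))"
  by (simp add: trace_def) (rule sum.swap)

lemma trace_scaleR: "trace (c *\<^sub>R A) = c * trace A"
  for A :: "real^'n::finite^'n"
  by (simp add: trace_def sum_distrib_left)

lemma trace_kron: "trace (kron A B) = trace A * trace B"
  for A :: "'a::comm_semiring_1^'p::finite^'p" and B :: "'a^'q::finite^'q"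
  by (simp add: kron_def trace_def sum_UNIV_prod sum_product)

lemma trace_ptrace2: "trace (ptrace2 A) = trace A"
  for A :: "'a::comm_semiring_1^('p::finite \<times> 'q::finite)^('p \<times> 'q)"
  by (simp add: trace_def ptrace2_def sum_UNIV_prod)

lemma trace_kron_mat1_mult: "trace (kron X (mat 1 :: 'a^'k^'k) ** R) = trace (X ** ptrace2 R)"
  for X :: "'a::comm_semiring_1^'n::finite^'n" and R :: "'a^('n \<times> 'k::finite)^('n \<times> 'k)"
proof -
  have "trace (kron X (mat 1 :: 'a^'k^'k) ** R)
      = (\<Sum>i\<in>UNIV. \<Sum>l\<in>UNIV. \<Sum>j\<in>UNIV. \<Sum>l'\<in>UNIV. X$i$j * (if l = l' then 1 else 0) * R$(j,l')$(i,l))"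
    by (simp add: trace_def matrix_matrix_mult_def kron_def sum_UNIV_prod mat_def)
  also have "\<dots> = (\<Sum>i\<in>UNIV. \<Sum>l\<in>UNIV. \<Sum>j\<in>UNIV. X$i$j * R$(j,l)$(i,l))"
    by (simp add: if_distrib if_distribR cong: if_cong)
  also have "\<dots> = (\<Sum>i\<in>UNIV. \<Sum>j\<in>UNIV. \<Sum>l\<in>UNIV. X$i$j * R$(j,l)$(i,l))"
    by (rule sum.cong[OF refl], rule sum.swap)
  also have "\<dots> = trace (X ** ptrace2 R)"
    by (simp add: trace_def matrix_matrix_mult_def ptrace2_def sum_distrib_left)
  finally show ?thesis .
qed

lemma linear_trace_mult: "linear (\<lambda>A. trace (X ** A))"
  for X :: "real^'n::finite^'m::finite"
proof (rule linearI)
  show "trace (X ** (A + B)) = trace (X ** A) + trace (X ** B)" for A B :: "real^'m^'n"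
    by (simp add: matrix_add_ldistrib trace_add)
  show "trace (X ** (c *\<^sub>R A)) = c *\<^sub>R trace (X ** A)" for c and A :: "real^'m^'n"
    by (simp add: trace_def matrix_matrix_mult_def sum_distrib_left mult.left_commute)
qed

lemma linear_ptrace2: "linear (ptrace2 :: real^('p::finite \<times> 'q::finite)^('p \<times> 'q) \<Rightarrow> real^'p^'p)"
  by (rule linearI) (simp_all add: ptrace2_def vec_eq_iff sum.distrib sum_distrib_left)

lemma ptrace2_kron: "ptrace2 (kron A B) = trace B *\<^sub>R A"
  by (simp add: ptrace2_def kron_def trace_def vec_eq_iff sum_distrib_left mult.commute)

lemma ptrace1_kron: "ptrace1 (kron A B) = trace A *\<^sub>R B"
  by (simp add: ptrace1_def kron_def trace_def vec_eq_iff sum_distrib_right)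

lemma ptrace1_eq_trace_block: "ptrace1 A $ q $ q' = trace (block A q q')"
  by (simp add: ptrace1_def trace_def block_def)

lemma ptrace2_outer: "ptrace2 (outer \<psi>) = reshape \<psi> ** transpose (reshape \<psi>)"
  by (simp add: ptrace2_def outer_def reshape_def matrix_matrix_mult_def transpose_def vec_eq_iff)

lemma kron_sum_left: "kron (\<Sum>i\<in>I. f i) B = (\<Sum>i\<in>I. kron (f i) B)"
  for f :: "'i \<Rightarrow> 'a::comm_semiring_1^'p::finite^'p" and B :: "'a^'q::finite^'q"
  by (simp add: kron_def vec_eq_iff sum_distrib_right)

lemma kron_sum_right: "kron A (\<Sum>i\<in>I. f i) = (\<Sum>i\<in>I. kron A (f i))"
  for f :: "'i \<Rightarrow> 'a::comm_semiring_1^'q::finite^'q" and A :: "'a^'p::finite^'p"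
  by (simp add: kron_def vec_eq_iff sum_distrib_left)

lemma block_sum: "block (\<Sum>i\<in>I. f i) q q' = (\<Sum>i\<in>I. block (f i) q q')"
  by (simp add: block_def vec_eq_iff)

lemma block_kron: "block (kron A B) q q' = B$q$q' *\<^sub>R A"
  by (simp add: block_def kron_def vec_eq_iff mult.commute)

lemma map_A_eq_block: "map_A L A = (\<chi> u v. L (block A (snd u) (snd v)) $ fst u $ fst v)"
  by (simp add: map_A_def block_def)

lemma map_A_kron: "linear L \<Longrightarrow> map_A L (kron A B) = kron (L A) B"
  for A :: "real^'p::finite^'p" and B :: "real^'q::finite^'q"
  by (simp add: map_A_eq_block block_kron linear_cmul) (simp add: kron_def vec_eq_iff mult.commute)

lemma map_A_eq_kron_ptrace1D:
  fixes L :: "real^'p::finite^'p \<Rightarrow> real^'m::finite^'m" and \<Phi> :: "real^('p \<times> 'q::finite)^('p \<times> 'q)"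
  assumes "map_A L \<Phi> = kron Y (ptrace1 \<Phi>)"
  shows "L (block \<Phi> q q') = trace (block \<Phi> q q') *\<^sub>R Y"
proof -
  have "L (block \<Phi> q q') $ i $ j = Y $ i $ j * trace (block \<Phi> q q')" for i j
  proof -
    have "L (block \<Phi> q q') $ i $ j = map_A L \<Phi> $ (i, q) $ (j, q')"
      by (simp only: map_A_eq_block vec_lambda_beta fst_conv snd_conv)
    also have "\<dots> = Y $ i $ j * trace (block \<Phi> q q')"
      by (simp only: assms kron_def vec_lambda_beta fst_conv snd_conv ptrace1_eq_trace_block)
    finally show ?thesis .
  qed
  then show ?thesis
    by (simp add: vec_eq_iff mult.commute)
qed

lemma ptransA_sum: "ptransA (\<Sum>i\<in>I. f i) = (\<Sum>i\<in>I. ptransA (f i))"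
  by (simp add: ptransA_def vec_eq_iff)

lemma ptransA_kron: "ptransA (kron A B) = kron (transpose A) B"
  by (simp add: ptransA_def kron_def transpose_def vec_eq_iff)

lemma swap_op_mult:
  fixes A :: "'a::comm_semiring_1^('p::finite \<times> 'p)^('p \<times> 'p)"
  shows "swap_op ** A = (\<chi> u v. A $ (snd u, fst u) $ v)"
proof -
  have "(\<Sum>w\<in>UNIV. (if fst u = snd w \<and> snd u = fst w then 1 else 0) * A$w$v)
      = A $ (snd u, fst u) $ v" for u v
  proof -
    have "(\<Sum>w\<in>UNIV. (if fst u = snd w \<and> snd u = fst w then 1 else 0) * A$w$v)
        = (\<Sum>w\<in>UNIV. if w = (snd u, fst u) then A$w$v else 0)"
      by (rule sum.cong) auto
    then show ?thesis
      by simp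
  qed
  then show ?thesis
    by (simp add: swap_op_def matrix_matrix_mult_def vec_eq_iff)
qed

lemma swap_op_mult_kron_outer: "swap_op ** kron (outer \<psi>) (outer \<psi>) = kron (outer \<psi>) (outer \<psi>)"
  by (simp add: swap_op_mult kron_def outer_def vec_eq_iff)

lemma swap_invariant_row_eq:
  fixes A :: "'a::comm_semiring_1^('p::finite \<times> 'p)^('p \<times> 'p)"
  assumes "swap_op ** A = A"
  shows "A $ (b, a) $ v = A $ (a, b) $ v"
proof -
  have "(swap_op ** A) $ (a, b) $ v = A $ (a, b) $ v"
    by (simp only: assms)
  then show ?thesis
    by (simp add: swap_op_mult)
qed

lemma cmat_sum: "cmat (\<Sum>i\<in>I. f i) = (\<Sum>i\<in>I. cmat (f i))"
  by (simp add: cmat_def vec_eq_iff)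

lemma cmat_kron: "cmat (kron A B) = kron (cmat A) (cmat B)"
  by (simp add: cmat_def kron_def vec_eq_iff)

lemma cmat_ptransA: "cmat (ptransA A) = ptransA (cmat A)"
  by (simp add: cmat_def ptransA_def vec_eq_iff)

section \<open>From the primal problem to the conic program\<close>

type_synonym ('n, 'k) operator_AB = "real^(('n \<times> 'k) \<times> ('n \<times> 'k))^(('n \<times> 'k) \<times> ('n \<times> 'k))"

definition primal_feasible ::
    "(real^'n::finite^'n \<Rightarrow> real^'m::finite^'m) \<Rightarrow> real^'m^'m \<Rightarrow> nat \<Rightarrow> real^'n^'n \<Rightarrow> bool" where
  "primal_feasible \<Lambda> Y k \<rho> \<longleftrightarrow> \<Lambda> \<rho> = Y \<and> trace \<rho> = 1 \<and> psd_real \<rho> \<and> rank \<rho> \<le> k"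

definition conic_feasible ::
    "(real^'p::finite^'p \<Rightarrow> real^'m::finite^'m) \<Rightarrow> real^'m^'m \<Rightarrow> real^('p \<times> 'p)^('p \<times> 'p) \<Rightarrow> bool" where
  "conic_feasible L Y \<Phi> \<longleftrightarrow> cmat \<Phi> \<in> SEP \<and> trace \<Phi> = 1 \<and> swap_op ** \<Phi> = \<Phi> \<and> ptransA \<Phi> = \<Phi> \<and>
     map_A L \<Phi> = kron Y (ptrace1 \<Phi>)"

lemma kron_in_SEP: "psd_complex M \<Longrightarrow> psd_complex N \<Longrightarrow> kron M N \<in> SEP"
  unfolding SEP_def
  by (intro CollectI exI[of _ 1] exI[of _ "\<lambda>_. 1"] exI[of _ "\<lambda>_. M"] exI[of _ "\<lambda>_. N"]) simp

lemma conic_feasible_kron_outer: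
  assumes "linear L" and "trace (outer \<psi>) = 1" and "L (outer \<psi>) = Y"
  shows "conic_feasible L Y (kron (outer \<psi>) (outer \<psi>))"
  using assms psd_real_outer[of \<psi>]
  by (simp add: conic_feasible_def cmat_kron kron_in_SEP psd_complex_cmat_iff trace_kron
      swap_op_mult_kron_outer ptransA_kron transpose_outer map_A_kron ptrace1_kron)

lemma conic_feasible_of_primal:
  fixes \<Lambda> :: "real^'n::finite^'n \<Rightarrow> real^'m::finite^'m"
  assumes lin: "linear \<Lambda>" and feas: "primal_feasible \<Lambda> Y CARD('k::finite) \<rho>"
  shows "\<exists>\<Phi> :: ('n, 'k) operator_AB.
           conic_feasible (\<lambda>\<sigma>. \<Lambda> (ptrace2 \<sigma>)) Y \<Phi> \<and> ptrace2 (ptrace2 \<Phi>) = \<rho>"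
proof -
  obtain F :: "real^'k^'n" where F: "\<rho> = F ** transpose F"
    using feas psd_real_rank_le_iff_gram by (auto simp: primal_feasible_def)
  define \<psi> :: "real^('n \<times> 'k)" where "\<psi> = (\<chi> u. F $ fst u $ snd u)"
  have ptrace2_P: "ptrace2 (outer \<psi>) = \<rho>"
    by (simp add: ptrace2_outer F reshape_def \<psi>_def)
  then have trace_P: "trace (outer \<psi>) = 1"
    using feas trace_ptrace2[of "outer \<psi>"] by (simp add: primal_feasible_def)
  have "conic_feasible (\<lambda>\<sigma>. \<Lambda> (ptrace2 \<sigma>)) Y (kron (outer \<psi>) (outer \<psi>))"
    using feas trace_P ptrace2_P
    by (intro conic_feasible_kron_outer linear_compose[OF linear_ptrace2 lin, unfolded o_def])
      (simp_all add: primal_feasible_def)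
  moreover have "ptrace2 (ptrace2 (kron (outer \<psi>) (outer \<psi>))) = \<rho>"
    by (simp add: ptrace2_kron trace_P linear_cmul[OF linear_ptrace2] ptrace2_P)
  ultimately show ?thesis
    by blast
qed

section \<open>Separable operators invariant under swap and partial transpose\<close>

definition tensor :: "complex^'p::finite \<Rightarrow> complex^'q::finite \<Rightarrow> complex^('p \<times> 'q)" where
  "tensor x y = (\<chi> u. x $ fst u * y $ snd u)"

definition vcnj :: "complex^'p::finite \<Rightarrow> complex^'p" where
  "vcnj x = (\<chi> i. cnj (x$i))"

lemma scaleR_nth_complex: "(a *\<^sub>R x) $ i = complex_of_real a * x $ i"
  for x :: "complex^'p::finite"
  by (subst vector_scaleR_component) (rule scaleR_conv_of_real)

lemma couter_scaleR: "couter (a *\<^sub>R v) = (a * a) *\<^sub>R couter v"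
  by (simp add: couter_def vec_eq_iff scaleR_nth_complex mult_ac)

lemma tensor_scaleR_left: "tensor (a *\<^sub>R x) y = a *\<^sub>R tensor x y"
  by (simp add: tensor_def vec_eq_iff scaleR_nth_complex mult_ac)

lemma kron_couter: "kron (couter x) (couter y) = couter (tensor x y)"
  by (simp add: kron_def couter_def tensor_def vec_eq_iff)

lemma ptransA_couter_tensor: "ptransA (couter (tensor x y)) = couter (tensor (vcnj x) y)"
  by (simp add: ptransA_def couter_def tensor_def vcnj_def vec_eq_iff mult_ac)

inductive_set product_cone :: "(complex^('p::finite \<times> 'q::finite)^('p \<times> 'q)) set" where
  zero: "0 \<in> product_cone"
| add: "A \<in> product_cone \<Longrightarrow> A + couter (tensor x y) \<in> product_cone"

lemma couter_tensor_in_product_cone: "couter (tensor x y) \<in> product_cone"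
  using product_cone.add[OF product_cone.zero] by simp

lemma product_cone_add:
  assumes "A \<in> product_cone" and "B \<in> product_cone"
  shows "A + B \<in> product_cone"
  using assms(2)
proof induction
  case (add B x y)
  then show ?case
    using product_cone.add[of "A + B" x y] by (simp add: add.assoc)
qed (simp add: assms(1))

lemma product_cone_sum: "(\<And>j. j \<in> J \<Longrightarrow> f j \<in> product_cone) \<Longrightarrow> sum f J \<in> product_cone"
  by (induction J rule: infinite_finite_induct) (auto intro: product_cone.zero product_cone_add)

lemma product_cone_scaleR:
  assumes "0 \<le> c" and "A \<in> product_cone"
  shows "c *\<^sub>R A \<in> product_cone"
  using assms(2)
proof induction
  case (add A x y)
  have "c *\<^sub>R couter (tensor x y) = couter (tensor (sqrt c *\<^sub>R x) y)"
    using assms(1) by (simp add: tensor_scaleR_left couter_scaleR)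
  with add show ?case
    using product_cone.add[of "c *\<^sub>R A" "sqrt c *\<^sub>R x" y] by (simp add: scaleR_add_right)
qed (simp add: product_cone.zero)

lemma kron_in_product_cone:
  assumes "psd_complex M" and "psd_complex N"
  shows "kron M N \<in> product_cone"
proof -
  obtain r s :: nat and x y where "M = (\<Sum>a<r. couter (x a))" and "N = (\<Sum>b<s. couter (y b))"
    using psd_complex_sum_couter assms by metis
  then show ?thesis
    by (simp add: kron_sum_left kron_sum_right kron_couter product_cone_sum
        couter_tensor_in_product_cone)
qed

lemma SEP_subset_product_cone: "SEP \<subseteq> product_cone"
proof
  fix \<Phi> :: "complex^('p::finite \<times> 'p)^('p \<times> 'p)"
  assume "\<Phi> \<in> SEP"
  then obtain r :: nat and c M N where
    terms: "\<forall>j<r. 0 \<le> c j \<and> psd_complex (M j) \<and> psd_complex (N j)" and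
    \<Phi>: "\<Phi> = (\<Sum>j<r. c j *\<^sub>R kron (M j) (N j))"
    unfolding SEP_def by blast
  show "\<Phi> \<in> product_cone"
    unfolding \<Phi> using terms
    by (auto intro: product_cone_sum product_cone_scaleR kron_in_product_cone)
qed

lemma product_cone_sum_couter:
  "A \<in> product_cone \<Longrightarrow> \<exists>(r::nat) x y. A = (\<Sum>t<r. couter (tensor (x t) (y t)))"
proof (induction A rule: product_cone.induct)
  case zero
  show ?case
    by (rule exI[of _ "0::nat"]) simp
next
  case (add A x0 y0)
  then obtain r :: nat and x y where "A = (\<Sum>t<r. couter (tensor (x t) (y t)))"
    by blast
  then have "A + couter (tensor x0 y0)
      = (\<Sum>t<Suc r. couter (tensor ((x(r := x0)) t) ((y(r := y0)) t)))"
    by simp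
  then show ?case
    by blast
qed

lemma sum_mult_cnj_eq_0:
  fixes z :: "'i \<Rightarrow> complex"
  assumes "finite T" and "(\<Sum>t\<in>T. z t * cnj (z t)) = 0" and "t \<in> T"
  shows "z t = 0"
proof -
  have "(\<Sum>t\<in>T. z t * cnj (z t)) = complex_of_real (\<Sum>t\<in>T. (cmod (z t))\<^sup>2)"
    by (simp only: of_real_sum complex_norm_square)
  with assms(2) have "(\<Sum>t\<in>T. (cmod (z t))\<^sup>2) = 0"
    by (simp only: of_real_eq_0_iff)
  then have "(cmod (z t))\<^sup>2 = 0"
    using assms(1,3) by (simp add: sum_nonneg_eq_0_iff)
  then show ?thesis
    by simp
qed

lemma sum_couter_rows_eq:
  fixes w :: "'i \<Rightarrow> complex^'p::finite"
  assumes fin: "finite T" and t: "t \<in> T"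
    and rows: "\<And>v. (\<Sum>t\<in>T. couter (w t)) $ u $ v = (\<Sum>t\<in>T. couter (w t)) $ u' $ v"
  shows "w t $ u = w t $ u'"
proof -
  let ?A = "\<Sum>t\<in>T. couter (w t)"
  have entry: "?A $ a $ b = (\<Sum>t\<in>T. w t $ a * cnj (w t $ b))" for a b
    by (simp add: couter_def)
  have "(\<Sum>t\<in>T. (w t $ u - w t $ u') * cnj (w t $ u - w t $ u'))
      = (?A$u$u - ?A$u'$u) - (?A$u$u' - ?A$u'$u')"
    unfolding entry by (simp add: algebra_simps sum.distrib sum_subtractf)
  also have "\<dots> = 0"
    using rows[of u] rows[of u'] by simp
  finally have "w t $ u - w t $ u' = 0"
    by (rule sum_mult_cnj_eq_0[OF fin _ t])
  then show ?thesis
    by simp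
qed

lemma couter_tensor_symmetric:
  assumes sym: "\<And>a b. x$a * y$b = x$b * y$a"
  shows "\<exists>z. couter (tensor x y) = couter (tensor z z)"
proof (cases "x = 0")
  case True
  then have "couter (tensor x y) = couter (tensor 0 0)"
    by (simp add: couter_def tensor_def vec_eq_iff)
  then show ?thesis
    by blast
next
  case False
  then obtain a0 where a0: "x$a0 \<noteq> 0"
    by (auto simp: vec_eq_iff)
  define l where "l = y$a0 / x$a0"
  have y: "y$b = l * x$b" for b
    using sym[of a0 b] a0 by (simp add: l_def field_simps)
  define s where "s = sqrt (cmod l)"
  have "l * cnj l = complex_of_real ((cmod l)\<^sup>2)"
    by (rule complex_norm_square[symmetric])
  also have "(cmod l)\<^sup>2 = s * s * s * s"
    by (simp add: s_def power2_eq_square)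
  finally have "l * cnj l = complex_of_real (s * s * s * s)" .
  moreover have "couter (tensor x y) $ u $ v = l * cnj l * couter (tensor x x) $ u $ v" for u v
    by (simp add: couter_def tensor_def y mult_ac)
  moreover have "couter (tensor (s *\<^sub>R x) (s *\<^sub>R x)) $ u $ v
      = complex_of_real (s * s * s * s) * couter (tensor x x) $ u $ v" for u v
    by (simp add: couter_def tensor_def scaleR_nth_complex mult_ac) (simp add: scaleR_conv_of_real)
  ultimately have "couter (tensor x y) = couter (tensor (s *\<^sub>R x) (s *\<^sub>R x))"
    by (simp add: vec_eq_iff)
  then show ?thesis
    by blast
qed

lemma couter_eq_cmat_outer:
  assumes real: "\<And>a b. cnj (z$a) * z$b = cnj (z$b) * z$a"
  shows "\<exists>\<phi>. couter z = cmat (outer \<phi>)"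
proof (cases "z = 0")
  case True
  then have "couter z = cmat (outer 0)"
    by (simp add: couter_def cmat_def outer_def vec_eq_iff)
  then show ?thesis
    by blast
next
  case False
  then obtain a0 where a0: "z$a0 \<noteq> 0"
    by (auto simp: vec_eq_iff)
  (* phi is z rotated by the inverse phase of z$a0 *)
  define n where "n = cmod (z$a0)"
  define \<phi> :: "real^_" where "\<phi> = (\<chi> b. Re (z$b * cnj (z$a0)) / n)"
  have n: "0 < n" "complex_of_real (n * n) = z$a0 * cnj (z$a0)"
    using a0 unfolding n_def power2_eq_square[symmetric] by (simp, simp only: complex_norm_square)
  have Re: "complex_of_real (Re (z$b * cnj (z$a0))) = z$b * cnj (z$a0)" for b
  proof -
    have "cnj (z$b * cnj (z$a0)) = z$b * cnj (z$a0)"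
      using real[of a0 b] by (simp add: mult.commute)
    then show ?thesis
      by (metis Reals_cnj_iff of_real_Re)
  qed
  have "z$a * cnj (z$b) = complex_of_real (\<phi>$a * \<phi>$b)" for a b
  proof -
    have "z$a * cnj (z$b) * complex_of_real (n * n) = (z$a * cnj (z$a0)) * cnj (z$b * cnj (z$a0))"
      unfolding n(2) by (simp add: mult_ac)
    also have "\<dots>
        = complex_of_real (Re (z$a * cnj (z$a0))) * cnj (complex_of_real (Re (z$b * cnj (z$a0))))"
      by (simp only: Re)
    also have "\<dots> = complex_of_real (\<phi>$a * \<phi>$b) * complex_of_real (n * n)"
      using n(1) by (simp add: \<phi>_def)
    finally show ?thesis
      using n(1) by simp
  qed
  then have "couter z = cmat (outer \<phi>)"
    by (simp add: couter_def cmat_def outer_def vec_eq_iff)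
  then show ?thesis
    by blast
qed

lemma SEP_swap_invariant_decomp:
  fixes \<Phi> :: "real^('p::finite \<times> 'p)^('p \<times> 'p)"
  assumes sep: "cmat \<Phi> \<in> SEP" and swap: "swap_op ** \<Phi> = \<Phi>"
  shows "\<exists>(r::nat) z. cmat \<Phi> = (\<Sum>t<r. couter (tensor (z t) (z t)))"
proof -
  obtain r :: nat and x y where dec: "cmat \<Phi> = (\<Sum>t<r. couter (tensor (x t) (y t)))"
    using product_cone_sum_couter SEP_subset_product_cone sep by blast
  have "\<exists>z. couter (tensor (x t) (y t)) = couter (tensor z z)" if "t < r" for t
  proof (rule couter_tensor_symmetric)
    fix a b
    have "tensor (x t) (y t) $ (a, b) = tensor (x t) (y t) $ (b, a)"
      using that swap_invariant_row_eq[OF swap, of a b]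
      by (intro sum_couter_rows_eq[where T = "{..<r}" and w = "\<lambda>t. tensor (x t) (y t)"])
        (simp_all add: dec[symmetric] cmat_def)
    then show "x t $ a * y t $ b = x t $ b * y t $ a"
      by (simp add: tensor_def)
  qed
  then obtain z where "\<And>t. t < r \<Longrightarrow> couter (tensor (x t) (y t)) = couter (tensor (z t) (z t))"
    by metis
  then have "cmat \<Phi> = (\<Sum>t<r. couter (tensor (z t) (z t)))"
    unfolding dec by (intro sum.cong) auto
  then show ?thesis
    by blast
qed

(* The partial transpose turns z z^* (x) z z^* into conj(z) conj(z)^* (x) z z^*; invariance
   under it, combined with swap symmetry, forces every entry conj(z_a) z_b of z z^* to be real. *)
lemma ptransA_invariant_real_decomp:
  fixes \<Phi> :: "real^('p::finite \<times> 'p)^('p \<times> 'p)" and r :: nat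
  assumes dec: "cmat \<Phi> = (\<Sum>t<r. couter (tensor (z t) (z t)))"
    and swap: "swap_op ** \<Phi> = \<Phi>" and ptA: "ptransA \<Phi> = \<Phi>"
  shows "\<exists>\<phi>. \<Phi> = (\<Sum>t<r. kron (outer (\<phi> t)) (outer (\<phi> t)))"
proof -
  have "cmat \<Phi> = ptransA (cmat \<Phi>)"
    by (simp add: ptA flip: cmat_ptransA)
  also have "\<dots> = (\<Sum>t<r. couter (tensor (vcnj (z t)) (z t)))"
    by (simp add: dec ptransA_sum ptransA_couter_tensor)
  finally have dec_cnj: "cmat \<Phi> = (\<Sum>t<r. couter (tensor (vcnj (z t)) (z t)))" .
  have "\<exists>\<phi>. couter (z t) = cmat (outer \<phi>)" if "t < r" for t
  proof (rule couter_eq_cmat_outer)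
    fix a b
    have "tensor (vcnj (z t)) (z t) $ (a, b) = tensor (vcnj (z t)) (z t) $ (b, a)"
      using that swap_invariant_row_eq[OF swap, of a b]
      by (intro sum_couter_rows_eq[where T = "{..<r}" and w = "\<lambda>t. tensor (vcnj (z t)) (z t)"])
        (simp_all add: dec_cnj[symmetric] cmat_def)
    then show "cnj (z t $ a) * z t $ b = cnj (z t $ b) * z t $ a"
      by (simp add: tensor_def vcnj_def)
  qed
  then obtain \<phi> where \<phi>: "\<And>t. t < r \<Longrightarrow> couter (z t) = cmat (outer (\<phi> t))"
    by metis
  have "cmat \<Phi> = cmat (\<Sum>t<r. kron (outer (\<phi> t)) (outer (\<phi> t)))"
    unfolding dec cmat_sum cmat_kron using \<phi> by (intro sum.cong) (auto simp flip: kron_couter)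
  then show ?thesis
    by (auto simp: cmat_inject)
qed

lemma conic_feasible_decomp:
  assumes "conic_feasible L Y \<Phi>"
  shows "\<exists>(r::nat) \<phi>. \<Phi> = (\<Sum>t<r. kron (outer (\<phi> t)) (outer (\<phi> t)))"
proof -
  have "cmat \<Phi> \<in> SEP" and swap: "swap_op ** \<Phi> = \<Phi>" and "ptransA \<Phi> = \<Phi>"
    using assms by (simp_all add: conic_feasible_def)
  moreover obtain r :: nat and z where "cmat \<Phi> = (\<Sum>t<r. couter (tensor (z t) (z t)))"
    using SEP_swap_invariant_decomp[OF _ swap] calculation by blast
  ultimately show ?thesis
    using ptransA_invariant_real_decomp by blast
qed

section \<open>From the conic program back to the primal problem\<close>

(* sum_t |G R_t|^2 = sum_b <G b, G (sum_t <R_t, b> R_t)>, expanding G R_t in the basis. *)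
lemma linear_eq_0_on_frame:
  fixes G :: "'a::euclidean_space \<Rightarrow> 'b::real_inner" and R :: "'i \<Rightarrow> 'a"
  assumes lin: "linear G" and fin: "finite T" and t: "t \<in> T"
    and frame: "\<And>b. b \<in> Basis \<Longrightarrow> G (\<Sum>s\<in>T. (R s \<bullet> b) *\<^sub>R R s) = 0"
  shows "G (R t) = 0"
proof -
  have G_R: "G (R s) = (\<Sum>b\<in>Basis. (R s \<bullet> b) *\<^sub>R G b)" for s
  proof -
    have "G (R s) = G (\<Sum>b\<in>Basis. (R s \<bullet> b) *\<^sub>R b)"
      by (simp add: euclidean_representation)
    then show ?thesis
      by (simp add: linear_sum[OF lin] linear_scale[OF lin])
  qed
  have "G (R s) \<bullet> G (R s) = (\<Sum>b\<in>Basis. (R s \<bullet> b) * (G b \<bullet> G (R s)))" for s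
  proof -
    have "G (R s) \<bullet> G (R s) = (\<Sum>b\<in>Basis. (R s \<bullet> b) *\<^sub>R G b) \<bullet> G (R s)"
      by (simp only: G_R[of s, symmetric])
    then show ?thesis
      by (simp add: inner_sum_left)
  qed
  then have "(\<Sum>s\<in>T. G (R s) \<bullet> G (R s)) = (\<Sum>s\<in>T. \<Sum>b\<in>Basis. (R s \<bullet> b) * (G b \<bullet> G (R s)))"
    by simp
  also have "\<dots> = (\<Sum>b\<in>Basis. \<Sum>s\<in>T. (R s \<bullet> b) * (G b \<bullet> G (R s)))"
    by (rule sum.swap)
  also have "\<dots> = (\<Sum>b\<in>Basis. G b \<bullet> G (\<Sum>s\<in>T. (R s \<bullet> b) *\<^sub>R R s))"
    by (simp add: linear_sum[OF lin] linear_scale[OF lin] inner_sum_right)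
  also have "\<dots> = 0"
    by (simp add: frame)
  finally have "G (R t) \<bullet> G (R t) = 0"
    using fin t by (simp add: sum_nonneg_eq_0_iff)
  then show ?thesis
    by simp
qed

lemma Basis_matrix_axis:
  "b \<in> (Basis :: (real^'p::finite^'q::finite) set) \<Longrightarrow> \<exists>q p. b = axis q (axis p 1)"
  by (auto simp: Basis_vec_def)

lemma map_A_constraint_termwise:
  fixes L :: "real^'p::finite^'p \<Rightarrow> real^'m::finite^'m" and R :: "'i \<Rightarrow> real^'p^'p"
  assumes lin: "linear L" and fin: "finite T" and t: "t \<in> T"
    and \<Phi>: "\<Phi> = (\<Sum>s\<in>T. kron (R s) (R s))" and constraint: "map_A L \<Phi> = kron Y (ptrace1 \<Phi>)"
  shows "L (R t) = trace (R t) *\<^sub>R Y"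
proof -
  define G where "G \<sigma> = L \<sigma> - trace \<sigma> *\<^sub>R Y" for \<sigma>
  have lin_G: "linear G"
  proof (rule linearI)
    show "G (\<sigma> + \<tau>) = G \<sigma> + G \<tau>" for \<sigma> \<tau>
      by (simp add: G_def linear_add[OF lin] trace_add scaleR_add_left)
    show "G (c *\<^sub>R \<sigma>) = c *\<^sub>R G \<sigma>" for c \<sigma>
      by (simp add: G_def linear_scale[OF lin] trace_scaleR scaleR_diff_right)
  qed
  have G_block: "G (block \<Phi> q p) = 0" for q p
    using map_A_eq_kron_ptrace1D[OF constraint] by (simp add: G_def)
  have frame: "G (\<Sum>s\<in>T. (R s \<bullet> b) *\<^sub>R R s) = 0" if basis: "b \<in> Basis" for b
  proof -
    obtain q p where b: "b = axis q (axis p 1)"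
      using Basis_matrix_axis[OF basis] by blast
    have "(\<Sum>s\<in>T. (R s \<bullet> b) *\<^sub>R R s) = block \<Phi> q p"
      by (simp add: b \<Phi> block_sum block_kron inner_axis)
    then show ?thesis
      by (simp add: G_block)
  qed
  have "G (R t) = 0"
    by (rule linear_eq_0_on_frame[OF lin_G fin t frame])
  then show ?thesis
    by (simp add: G_def)
qed

lemma convex_combination_le_term:
  fixes w f :: "'i \<Rightarrow> real"
  assumes fin: "finite T" and w: "\<And>t. t \<in> T \<Longrightarrow> 0 \<le> w t" and sum_w: "sum w T = 1"
  shows "\<exists>t\<in>T. 0 < w t \<and> (\<Sum>s\<in>T. w s * f s) \<le> f t"
proof (rule ccontr)
  let ?S = "\<Sum>s\<in>T. w s * f s"
  assume "\<not> (\<exists>t\<in>T. 0 < w t \<and> ?S \<le> f t)"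
  then have less: "f t < ?S" if "t \<in> T" "0 < w t" for t
    using that by auto
  obtain t0 where t0: "t0 \<in> T" "0 < w t0"
  proof (rule ccontr)
    assume "\<not> thesis"
    then have "sum w T = 0"
      using w that by (intro sum.neutral) (meson antisym not_less)
    with sum_w show False
      by simp
  qed
  have "w s * f s \<le> w s * ?S" if "s \<in> T" for s
    using w[OF that] less[OF that] by (cases "w s = 0") (auto intro: mult_left_mono)
  moreover have "w t0 * f t0 < w t0 * ?S"
    using t0 less by simp
  ultimately have "?S < (\<Sum>s\<in>T. w s * ?S)"
    using fin t0(1) by (intro sum_strict_mono_ex1) auto
  also have "\<dots> = ?S"
    by (simp add: sum_distrib_right[symmetric] sum_w)
  finally show False
    by simp
qed

lemma primal_feasible_of_outer:
  fixes \<Lambda> :: "real^'n::finite^'n \<Rightarrow> real^'m::finite^'m" and \<phi> :: "real^('n \<times> 'k::finite)"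
  assumes lin: "linear \<Lambda>" and pos: "0 < trace (outer \<phi>)"
    and constraint: "\<Lambda> (ptrace2 (outer \<phi>)) = trace (outer \<phi>) *\<^sub>R Y"
  shows "primal_feasible \<Lambda> Y CARD('k) ((1 / trace (outer \<phi>)) *\<^sub>R ptrace2 (outer \<phi>))"
proof -
  define s where "s = trace (outer \<phi>)"
  define \<rho> where "\<rho> = (1 / s) *\<^sub>R ptrace2 (outer \<phi>)"
  have "\<rho> = ptrace2 (outer ((1 / sqrt s) *\<^sub>R \<phi>))"
    using pos by (simp add: \<rho>_def s_def outer_scaleR linear_scale[OF linear_ptrace2])
  then have "\<exists>F :: real^'k^'n. \<rho> = F ** transpose F"
    by (auto simp: ptrace2_outer)
  then have "psd_real \<rho> \<and> rank \<rho> \<le> CARD('k)"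
    by (simp only: psd_real_rank_le_iff_gram)
  moreover have "\<Lambda> \<rho> = Y"
    using pos constraint by (simp add: \<rho>_def s_def linear_scale[OF lin])
  moreover have "trace \<rho> = 1"
    using pos by (simp add: \<rho>_def s_def trace_scaleR trace_ptrace2)
  ultimately show ?thesis
    by (simp add: primal_feasible_def \<rho>_def s_def)
qed

lemma primal_feasible_of_conic:
  fixes \<Lambda> :: "real^'n::finite^'n \<Rightarrow> real^'m::finite^'m" and X :: "real^'n^'n"
    and \<Phi> :: "('n, 'k::finite) operator_AB"
  assumes lin: "linear \<Lambda>" and feas: "conic_feasible (\<lambda>\<sigma>. \<Lambda> (ptrace2 \<sigma>)) Y \<Phi>"
  shows "\<exists>\<rho>. primal_feasible \<Lambda> Y CARD('k) \<rho> \<and>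
           trace (X ** ptrace2 (ptrace2 \<Phi>)) \<le> trace (X ** \<rho>)"
proof -
  obtain r :: nat and \<phi> where \<Phi>: "\<Phi> = (\<Sum>t<r. kron (outer (\<phi> t)) (outer (\<phi> t)))"
    using conic_feasible_decomp[OF feas] by blast
  define s where "s t = trace (outer (\<phi> t))" for t
  define h where "h t = trace (X ** ptrace2 (outer (\<phi> t)))" for t
  have s_nonneg: "0 \<le> s t" for t
    by (simp add: s_def trace_outer)
  have lin_L: "linear (\<lambda>\<sigma>. \<Lambda> (ptrace2 \<sigma>))"
    using linear_compose[OF linear_ptrace2 lin] by (simp add: o_def)
  have constraint: "\<Lambda> (ptrace2 (outer (\<phi> t))) = s t *\<^sub>R Y" if "t < r" for t
    using map_A_constraint_termwise[OF lin_L finite_lessThan _ \<Phi>] feas that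
    by (simp add: conic_feasible_def s_def)
  have "(\<Sum>t<r. s t * s t) = 1"
    using feas by (simp add: conic_feasible_def \<Phi> trace_sum trace_kron s_def)
  then obtain t where t: "t < r" "0 < s t * s t"
    and le: "(\<Sum>u<r. s u * s u * (h u / s u)) \<le> h t / s t"
    using convex_combination_le_term[of "{..<r}" "\<lambda>t. s t * s t" "\<lambda>t. h t / s t"] by auto
  have "trace (X ** ptrace2 (ptrace2 \<Phi>)) = (\<Sum>u<r. s u * h u)"
    by (simp add: \<Phi> linear_sum[OF linear_ptrace2] ptrace2_kron linear_scale[OF linear_ptrace2]
        linear_sum[OF linear_trace_mult] linear_scale[OF linear_trace_mult] s_def h_def)
  also have "\<dots> = (\<Sum>u<r. s u * s u * (h u / s u))"
    by (intro sum.cong refl) (cases "s u = 0"; simp)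
  finally have objective: "trace (X ** ptrace2 (ptrace2 \<Phi>)) \<le> h t / s t"
    using le by simp
  have "0 < s t"
    using t(2) s_nonneg[of t] by (simp add: zero_less_mult_iff)
  then have "primal_feasible \<Lambda> Y CARD('k) ((1 / s t) *\<^sub>R ptrace2 (outer (\<phi> t)))"
    using primal_feasible_of_outer[OF lin, of "\<phi> t"] constraint[OF t(1)] by (simp add: s_def)
  moreover have "trace (X ** ((1 / s t) *\<^sub>R ptrace2 (outer (\<phi> t)))) = h t / s t"
    by (simp add: linear_scale[OF linear_trace_mult] h_def)
  ultimately show ?thesis
    using objective by metis
qed

theorem theorem3:
  fixes X :: "real^'n^'n" and Lambda :: "real^'n^'n \<Rightarrow> real^'m^'m"
    and Y :: "real^'m^'m"
    and Ktype :: "'k::finite itself"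
  assumes "transpose X = X"
    and "linear Lambda"
  shows
   "Sup (ereal ` {trace (X ** \<rho>) | \<rho>. Lambda \<rho> = Y \<and> trace \<rho> = 1 \<and> psd_real \<rho> \<and>
                                     rank \<rho> \<le> CARD('k)})
  = Sup (ereal ` {trace (kron (kron X (mat 1 :: real^'k^'k)) (mat 1 :: real^('n \<times> 'k)^('n \<times> 'k)) ** \<Phi>)
          | \<Phi>. cmat \<Phi> \<in> SEP \<and> trace \<Phi> = 1 \<and> swap_op ** \<Phi> = \<Phi> \<and> ptransA \<Phi> = \<Phi> \<and>
               map_A (\<lambda>\<sigma>. Lambda (ptrace2 \<sigma>)) \<Phi> = kron Y (ptrace1 \<Phi>)})"
  (is "Sup (ereal ` ?P) = Sup (ereal ` ?C)")
proof -
  have primal: "?P = (\<lambda>\<rho>. trace (X ** \<rho>)) ` Collect (primal_feasible Lambda Y CARD('k))"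
    unfolding primal_feasible_def[abs_def] by (rule setcompr_eq_image)
  have conic: "?C = (\<lambda>\<Phi> :: ('n, 'k) operator_AB. trace (X ** ptrace2 (ptrace2 \<Phi>)))
      ` Collect (conic_feasible (\<lambda>\<sigma>. Lambda (ptrace2 \<sigma>)) Y)"
    unfolding conic_feasible_def[abs_def] trace_kron_mat1_mult by (rule setcompr_eq_image)
  show ?thesis
    unfolding primal conic image_image
    by (rule SUP_eq)
      (use conic_feasible_of_primal[OF assms(2)] primal_feasible_of_conic[OF assms(2), where X = X]
        in fastforce)+
qed

end
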